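(* Let $G=(g_{ij})$ be a Hermitian $4\times4$ matrix with $g_{ii}=0$, $g_{12}=g_{23}=g_{34}=1$, $|g_{13}|=1$, $g_{14}\ne0$, $g_{24}\ne0$. Then $G$ is the normalized Gram matrix of some ordered quadruple of distinct points of $\partial\mathbf H^2_{\mathbb C}$ if and only if $\mathrm{Re}(g_{13})\le0$, $\mathrm{Re}(g_{24}\overline{g}_{14})\le0$ and $\det G=0$.
   Context: $\mathbb C^{2,1}$ is $\mathbb C^3$ with the Hermitian form $\langle Z,W\rangle=z_1\overline{w}_3+z_2\overline{w}_2+z_3\overline{w}_1$; $\partial\mathbf H^2_{\mathbb C}$ is the set of null lines in $\mathbb P\mathbb C^2$. For a quadruple of boundary points with null lifts $P_i$, a Gram matrix is $(\langle P_i,P_j\rangle)$; the normalized Gram matrix is the unique Gram matrix (for suitable lifts) with $g_{ii}=0$, $g_{12}=g_{23}=g_{34}=1$, $|g_{13}|=1$. *)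

theory Defs
  imports "HOL-Analysis.Analysis" "HOL-Library.Numeral_Type"
begin

text \<open>Vectors of C^{2,1} are elements of complex^3 with indices 1,2,3 (in the numeral
  type 3 the literal 3 equals 0, distinct from 1 and 2).  Quadruples are indexed
  by the numeral type 4 with indices 1,2,3,4 (where 4 = 0 in that type).\<close>

definition hform :: "complex^3 \<Rightarrow> complex^3 \<Rightarrow> complex" where
  "hform Z W = Z$1 * cnj (W$3) + Z$2 * cnj (W$2) + Z$3 * cnj (W$1)"

text \<open>A lift of a boundary point of complex hyperbolic 2-space: a nonzero null vector.\<close>
definition null_lift :: "complex^3 \<Rightarrow> bool" where
  "null_lift P \<longleftrightarrow> P \<noteq> 0 \<and> hform P P = 0"

definition same_point :: "complex^3 \<Rightarrow> complex^3 \<Rightarrow> bool" where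
  "same_point P Q \<longleftrightarrow> (\<exists>c::complex. P = c *s Q)"

definition distinct_boundary_quadruple :: "(4 \<Rightarrow> complex^3) \<Rightarrow> bool" where
  "distinct_boundary_quadruple P \<longleftrightarrow>
     (\<forall>i. null_lift (P i)) \<and> (\<forall>i j. i \<noteq> j \<longrightarrow> \<not> same_point (P i) (P j))"

definition gram_matrix :: "(4 \<Rightarrow> complex^3) \<Rightarrow> complex^4^4" where
  "gram_matrix P = (\<chi> i j. hform (P i) (P j))"

definition normalized :: "complex^4^4 \<Rightarrow> bool" where
  "normalized G \<longleftrightarrow> (\<forall>i. G$i$i = 0) \<and> G$1$2 = 1 \<and> G$2$3 = 1 \<and> G$3$4 = 1
     \<and> cmod (G$1$3) = 1"

definition is_normalized_gram_of :: "complex^4^4 \<Rightarrow> (4 \<Rightarrow> complex^3) \<Rightarrow> bool" where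
  "is_normalized_gram_of G P \<longleftrightarrow> normalized G \<and>
     (\<exists>Q. (\<forall>i. Q i \<noteq> 0 \<and> same_point (Q i) (P i)) \<and> gram_matrix Q = G)"

definition hermitian4 :: "complex^4^4 \<Rightarrow> bool" where
  "hermitian4 G \<longleftrightarrow> (\<forall>i j. G$i$j = cnj (G$j$i))"

end

theory Submission
  imports Defs
begin

text \<open>
  Necessity: the Gram matrix of four vectors of a three-dimensional space has rank at most 3,
  so its determinant vanishes; and for three null vectors twice the real part of the triple
  product \<open>\<langle>A,B\<rangle>\<langle>B,C\<rangle>\<langle>C,A\<rangle>\<close> is their \<open>3\<times>3\<close> Gram determinant, which equals
  \<open>-|det(A,B,C)|\<^sup>2\<close> because the form has signature (2,1).  The triples (1,2,3) and (1,2,4)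
  give the two sign conditions.

  Sufficiency: take \<open>P\<^sub>1 = (1,0,0)\<close> and \<open>P\<^sub>2 = (0,0,1)\<close>; the prescribed products with them
  force \<open>P\<^sub>3 = (1, b, a\<^sup>*)\<close> and \<open>P\<^sub>4 = (q\<^sup>*, y, p\<^sup>*)\<close>, where \<open>a = g\<^sub>1\<^sub>3, p = g\<^sub>1\<^sub>4, q = g\<^sub>2\<^sub>4\<close>.
  The remaining conditions read \<open>|b|\<^sup>2 = -2 Re a\<close>, \<open>|y|\<^sup>2 = -2 Re (q p\<^sup>*)\<close> and
  \<open>b y\<^sup>* = 1 - p - a\<^sup>* q\<close>, which are solvable exactly when both real parts are non-positive and
  \<open>|1 - p - a\<^sup>* q|\<^sup>2 = 4 Re a Re (q p\<^sup>*)\<close>; the last equation is \<open>det G = 0\<close>.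
\<close>

lemma hform_commute: "hform B A = cnj (hform A B)"
  by (simp add: hform_def algebra_simps)

lemma hform_scale_left: "hform (c *s A) B = c * hform A B"
  by (simp add: hform_def algebra_simps)

lemma not_same_point_if_hform_nonzero:
  assumes "hform B B = 0" "hform A B \<noteq> 0"
  shows "\<not> same_point A B"
  using assms by (auto simp: same_point_def hform_scale_left)

lemma distinct_boundary_quadrupleI:
  assumes "\<And>i. hform (P i) (P i) = 0" "\<And>i j. i \<noteq> j \<Longrightarrow> hform (P i) (P j) \<noteq> 0"
  shows "distinct_boundary_quadruple P"
proof -
  have "P i \<noteq> 0" for i
  proof -
    define j :: 4 where "j = (if i = 1 then 2 else 1)"
    have "i \<noteq> j" by (simp add: j_def)
    then have "hform (P i) (P j) \<noteq> 0" by (rule assms(2))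
    then show ?thesis by (auto simp: hform_def)
  qed
  moreover have "\<not> same_point (P i) (P j)" if "i \<noteq> j" for i j
    using not_same_point_if_hform_nonzero[OF assms(1) assms(2)[OF that]] .
  ultimately show ?thesis
    using assms(1) by (simp add: distinct_boundary_quadruple_def null_lift_def)
qed

lemma is_normalized_gram_ofI:
  assumes "normalized G" "gram_matrix P = G" "distinct_boundary_quadruple P"
  shows "is_normalized_gram_of G P"
proof -
  have "same_point (P i) (P i)" for i
    unfolding same_point_def by (metis vector_smult_lid)
  then show ?thesis
    using assms unfolding is_normalized_gram_of_def distinct_boundary_quadruple_def null_lift_def
    by blast
qed

lemma gram_matrix_nth: "gram_matrix P $ i $ j = hform (P i) (P j)"
  by (simp add: gram_matrix_def)

definition det3 :: "complex^3 \<Rightarrow> complex^3 \<Rightarrow> complex^3 \<Rightarrow> complex" where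
  "det3 A B C = A$1*B$2*C$3 + A$2*B$3*C$1 + A$3*B$1*C$2
              - A$1*B$3*C$2 - A$2*B$1*C$3 - A$3*B$2*C$1"

lemma gram_det3:
  "hform A A * hform B B * hform C C + hform A B * hform B C * hform C A
     + hform A C * hform B A * hform C B - hform A A * hform B C * hform C B
     - hform A B * hform B A * hform C C - hform A C * hform B B * hform C A
   = - (det3 A B C * cnj (det3 A B C))"
  by (simp add: hform_def det3_def algebra_simps)

lemma Re_hform_cyclic_product_nonpos:
  assumes "hform A A = 0" "hform B B = 0" "hform C C = 0"
  shows "Re (hform A B * hform B C * hform C A) \<le> 0"
proof -
  define t where "t = hform A B * hform B C * hform C A"
  define d where "d = det3 A B C"
  have "cnj t = hform A C * hform B A * hform C B"
    unfolding t_def by (simp add: hform_commute[of A B] hform_commute[of B C] hform_commute[of C A])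
  then have "t + cnj t = - (d * cnj d)"
    using gram_det3[of A B C] unfolding assms t_def d_def by simp
  then have "complex_of_real (2 * Re t) = complex_of_real (- (cmod d)\<^sup>2)"
    by (simp only: complex_add_cnj complex_norm_square of_real_minus)
  then have "2 * Re t = - (cmod d)\<^sup>2"
    by (rule of_real_eq_iff[THEN iffD1])
  then show ?thesis
    unfolding t_def[symmetric] by (smt (verit) zero_le_power2)
qed

lemma det_gram_matrix: "det (gram_matrix P) = 0"
proof -
  define X :: "complex^4^4" where
    "X = (\<chi> i k. if k = 1 then P i$1 else if k = 2 then P i$2 else if k = 3 then P i$3 else 0)"
  define Y :: "complex^4^4" where
    "Y = (\<chi> k j. if k = 1 then cnj (P j$3) else if k = 2 then cnj (P j$2)
                  else if k = 3 then cnj (P j$1) else 0)"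
  have "gram_matrix P = X ** Y"
    by (simp add: vec_eq_iff gram_matrix_def matrix_matrix_mult_def sum_4 X_def Y_def hform_def)
  moreover have "det X = 0"
    by (rule det_zero_column[of 4]) (simp add: vec_eq_iff column_def X_def)
  ultimately show ?thesis by (simp add: det_mul)
qed

definition normal_gram :: "complex \<Rightarrow> complex \<Rightarrow> complex \<Rightarrow> complex^4^4" where
  "normal_gram a p q = (\<chi> i j.
     if i = j then 0
     else if (i, j) = (1, 3) then a else if (i, j) = (3, 1) then cnj a
     else if (i, j) = (1, 4) then p else if (i, j) = (4, 1) then cnj p
     else if (i, j) = (2, 4) then q else if (i, j) = (4, 2) then cnj q
     else 1)"

lemma normal_gram_nth:
  "normal_gram a p q $1$1 = 0" "normal_gram a p q $2$2 = 0"
  "normal_gram a p q $3$3 = 0" "normal_gram a p q $4$4 = 0"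
  "normal_gram a p q $1$2 = 1" "normal_gram a p q $2$1 = 1"
  "normal_gram a p q $2$3 = 1" "normal_gram a p q $3$2 = 1"
  "normal_gram a p q $3$4 = 1" "normal_gram a p q $4$3 = 1"
  "normal_gram a p q $1$3 = a" "normal_gram a p q $3$1 = cnj a"
  "normal_gram a p q $1$4 = p" "normal_gram a p q $4$1 = cnj p"
  "normal_gram a p q $2$4 = q" "normal_gram a p q $4$2 = cnj q"
  by (simp_all add: normal_gram_def)

lemma normal_gram_nth_nonzero:
  assumes "a \<noteq> 0" "p \<noteq> 0" "q \<noteq> 0" "i \<noteq> j"
  shows "normal_gram a p q $i$j \<noteq> 0"
  using assms by (simp add: normal_gram_def)

lemma normal_gram_eqI:
  assumes "hermitian4 G" "\<forall>i. G$i$i = 0" "G$1$2 = 1" "G$2$3 = 1" "G$3$4 = 1"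
  shows "G = normal_gram (G$1$3) (G$1$4) (G$2$4)"
proof -
  have H: "G$i$j = cnj (G$j$i)" for i j
    using assms(1) unfolding hermitian4_def by blast
  show ?thesis
    using assms(2-5) H[of 2 1] H[of 3 2] H[of 4 3] H[of 3 1] H[of 4 1] H[of 4 2]
    by (simp add: vec_eq_iff forall_4 normal_gram_nth)
qed

lemma det_normal_gram:
  "det (normal_gram a p q) = (1 - p - cnj a * q) * cnj (1 - p - cnj a * q)
                             - (a + cnj a) * (q * cnj p + cnj (q * cnj p))"
proof -
  \<comment> \<open>Keeping \<open>G\<close> opaque stops simp from unfolding the matrix in all 24 terms.\<close>
  define G where "G = normal_gram a p q"
  note entries = normal_gram_nth[of a p q, folded G_def]
  have f1: "finite {2::4, 3, 4}" "1 \<notin> {2::4, 3, 4}" by auto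
  have f2: "finite {3::4, 4}" "2 \<notin> {3::4, 4}" by auto
  have f3: "finite {4::4}" "3 \<notin> {4::4}" by auto
  have "det G = (1 - p - cnj a * q) * cnj (1 - p - cnj a * q)
                - (a + cnj a) * (q * cnj p + cnj (q * cnj p))"
    unfolding det_def UNIV_4 sum_over_permutations_insert[OF f1]
      sum_over_permutations_insert[OF f2] sum_over_permutations_insert[OF f3] permutes_sing
    by (simp add: sign_swap_id permutation_swap_id sign_compose permutation_compose swap_id_eq
        entries)
      (simp add: algebra_simps)
  then show ?thesis by (simp add: G_def)
qed

lemma normal_gram_conditions_if_gram_matrix:
  assumes "gram_matrix P = normal_gram a p q"
  shows "Re a \<le> 0" "Re (q * cnj p) \<le> 0" "det (normal_gram a p q) = 0"
proof -
  have h: "hform (P i) (P j) = normal_gram a p q $i$j" for i j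
    using assms by (simp flip: gram_matrix_nth)
  have "Re (hform (P 1) (P 2) * hform (P 2) (P 3) * hform (P 3) (P 1)) \<le> 0"
    by (rule Re_hform_cyclic_product_nonpos) (simp_all add: h normal_gram_nth)
  then show "Re a \<le> 0" by (simp add: h normal_gram_nth)
  have "Re (hform (P 1) (P 2) * hform (P 2) (P 4) * hform (P 4) (P 1)) \<le> 0"
    by (rule Re_hform_cyclic_product_nonpos) (simp_all add: h normal_gram_nth)
  then show "Re (q * cnj p) \<le> 0" by (simp add: h normal_gram_nth)
  show "det (normal_gram a p q) = 0"
    using det_gram_matrix[of P] assms by simp
qed

lemma exists_mult_cnj_with_norms:
  fixes u v :: real and w :: complex
  assumes "u \<ge> 0" "v \<ge> 0" "(cmod w)\<^sup>2 = u * v"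
  shows "\<exists>b y. (cmod b)\<^sup>2 = u \<and> (cmod y)\<^sup>2 = v \<and> b * cnj y = w"
proof (cases "u = 0")
  case True
  then have "w = 0" using assms(3) by simp
  with True assms(2) show ?thesis
    by (intro exI[of _ 0] exI[of _ "of_real (sqrt v)"]) simp
next
  case False
  let ?b = "complex_of_real (sqrt u)"
  have "(cmod (cnj w / ?b))\<^sup>2 = v"
    using False assms by (simp add: norm_divide power_divide)
  moreover have "?b * cnj (cnj w / ?b) = w"
    using False assms(1) by simp
  ultimately show ?thesis
    using assms(1) by (intro exI[of _ ?b] exI[of _ "cnj w / ?b"]) simp
qed

definition standard_lifts :: "complex \<Rightarrow> complex \<Rightarrow> complex \<Rightarrow> complex \<Rightarrow> complex \<Rightarrow> 4 \<Rightarrow> complex^3" where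
  "standard_lifts a p q b y i =
     (if i = 1 then vector [1, 0, 0] else if i = 2 then vector [0, 0, 1]
      else if i = 3 then vector [1, b, cnj a] else vector [cnj q, y, cnj p])"

lemma gram_matrix_standard_lifts:
  assumes "(cmod b)\<^sup>2 = - 2 * Re a" "(cmod y)\<^sup>2 = - 2 * Re (q * cnj p)"
    and "b * cnj y = 1 - p - cnj a * q"
  shows "gram_matrix (standard_lifts a p q b y) = normal_gram a p q"
proof -
  have norm_sq: "z * cnj z = - (x + cnj x)" if "(cmod z)\<^sup>2 = - 2 * Re x" for z x
    using that by (simp flip: complex_norm_square add: complex_add_cnj)
  have "b * cnj b = - (a + cnj a)" "y * cnj y = - (q * cnj p + cnj (q * cnj p))"
    using norm_sq assms(1,2) by blast+
  moreover have "y * cnj b = 1 - cnj p - a * cnj q"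
    using arg_cong[OF assms(3), of cnj] by (simp add: mult.commute)
  ultimately show ?thesis
    using assms(3)
    by (simp add: vec_eq_iff forall_4 gram_matrix_def normal_gram_nth hform_def standard_lifts_def
        algebra_simps)
qed

lemma exists_gram_matrix_eq_normal_gram:
  assumes "Re a \<le> 0" "Re (q * cnj p) \<le> 0" "det (normal_gram a p q) = 0"
  shows "\<exists>P. gram_matrix P = normal_gram a p q"
proof -
  define w where "w = 1 - p - cnj a * q"
  define x where "x = q * cnj p"
  have "w * cnj w = (a + cnj a) * (x + cnj x)"
    using assms(3) unfolding det_normal_gram w_def[symmetric] x_def[symmetric] by simp
  then have "complex_of_real ((cmod w)\<^sup>2) = (a + cnj a) * (x + cnj x)"
    by (simp only: complex_norm_square)
  also have "\<dots> = complex_of_real ((- 2 * Re a) * (- 2 * Re x))"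
    by (simp add: complex_add_cnj)
  finally have "(cmod w)\<^sup>2 = (- 2 * Re a) * (- 2 * Re x)"
    by (simp only: of_real_eq_iff)
  moreover have "- 2 * Re a \<ge> 0" "- 2 * Re x \<ge> 0"
    using assms(1,2) unfolding x_def by linarith+
  ultimately obtain b y where "(cmod b)\<^sup>2 = - 2 * Re a" "(cmod y)\<^sup>2 = - 2 * Re x" "b * cnj y = w"
    using exists_mult_cnj_with_norms by blast
  then have "gram_matrix (standard_lifts a p q b y) = normal_gram a p q"
    unfolding w_def x_def by (rule gram_matrix_standard_lifts)
  then show ?thesis by blast
qed

theorem proposition3p1:
  fixes G :: "complex^4^4"
  assumes "hermitian4 G"
    and "\<forall>i. G$i$i = 0"
    and "G$1$2 = 1" and "G$2$3 = 1" and "G$3$4 = 1"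
    and "cmod (G$1$3) = 1"
    and "G$1$4 \<noteq> 0" and "G$2$4 \<noteq> 0"
  shows "(\<exists>P. distinct_boundary_quadruple P \<and> is_normalized_gram_of G P) \<longleftrightarrow>
         (Re (G$1$3) \<le> 0 \<and> Re (G$2$4 * cnj (G$1$4)) \<le> 0 \<and> det G = 0)"
proof -
  define a p q where "a = G$1$3" and "p = G$1$4" and "q = G$2$4"
  have G: "G = normal_gram a p q"
    unfolding a_def p_def q_def using assms(1-5) by (rule normal_gram_eqI)
  have "a \<noteq> 0" "p \<noteq> 0" "q \<noteq> 0"
    using assms(6-8) by (auto simp: a_def p_def q_def)
  then have offdiag: "G$i$j \<noteq> 0" if "i \<noteq> j" for i j
    using normal_gram_nth_nonzero that by (simp add: G)
  have "normalized G"
    using assms(2-6) by (simp add: normalized_def)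
  show ?thesis
    unfolding a_def[symmetric] p_def[symmetric] q_def[symmetric]
  proof
    assume "\<exists>P. distinct_boundary_quadruple P \<and> is_normalized_gram_of G P"
    then obtain Q where "gram_matrix Q = normal_gram a p q"
      by (auto simp: is_normalized_gram_of_def G)
    then show "Re a \<le> 0 \<and> Re (q * cnj p) \<le> 0 \<and> det G = 0"
      unfolding G by (blast dest: normal_gram_conditions_if_gram_matrix)
  next
    assume "Re a \<le> 0 \<and> Re (q * cnj p) \<le> 0 \<and> det G = 0"
    then obtain P where P: "gram_matrix P = G"
      using exists_gram_matrix_eq_normal_gram unfolding G by blast
    have "hform (P i) (P j) = G$i$j" for i j
      using P by (simp flip: gram_matrix_nth)
    then have "distinct_boundary_quadruple P"
      using assms(2) offdiag by (intro distinct_boundary_quadrupleI) simp_all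
    with P \<open>normalized G\<close> show "\<exists>P. distinct_boundary_quadruple P \<and> is_normalized_gram_of G P"
      using is_normalized_gram_ofI by blast
  qed
qed

end
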